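(* Let $f(x)\in\mathbb{Q}[x,x^{-1}]$ be a non-zero Laurent polynomial which is odd, i.e. $f(-x)=-f(x)$. Then $f$ satisfies WP: there exists a positive integer $N$ such that every rational number is of the form $f(a_1)+\cdots+f(a_N)$ with $a_1,\dots,a_N\in\mathbb{Q}^*$.
   Context: A rational function $f\in\mathbb{Q}(x)$ satisfies WP if for some $N\ge1$ every rational number is a sum of $N$ elements of $f(\mathbb{Q})$, the set of values of $f$ at rational non-poles. *)

theory Defs
  imports Complex_Main
begin

text \<open>A Laurent polynomial over Q is given by a finitely supported coefficient
function c :: int => rat (c k is the coefficient of x^k).\<close>

definition laurent_poly :: "(int \<Rightarrow> rat) \<Rightarrow> bool" where
  "laurent_poly c \<longleftrightarrow> finite {k. c k \<noteq> 0}"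

definition leval :: "(int \<Rightarrow> rat) \<Rightarrow> rat \<Rightarrow> rat" where
  "leval c a = (\<Sum>k\<in>{k. c k \<noteq> 0}. c k * a powi k)"

text \<open>Oddness as an identity of Laurent polynomials: f(-x) = -f(x), i.e.
the coefficient of x^k in f(-x), namely (-1)^k c k, equals - c k.\<close>
definition laurent_odd :: "(int \<Rightarrow> rat) \<Rightarrow> bool" where
  "laurent_odd c \<longleftrightarrow> (\<forall>k. (-1) powi k * c k = - c k)"

end

theory Submission
  imports Defs "HOL-Library.Infinite_Set"
begin

text \<open>Call h expressible with N terms if h(x) is a sum of N values of f at nonzero rationals
for all but finitely many x. Expressible functions are closed under sums, under
negation (f is odd), and under substitutions x \<mapsto> t x, x + 1, 1/x, which are injective.
Starting from f itself, the combination A h(2x) - B h(x) with A 2^j = B deletes the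
monomial x^j and keeps all others, so repeatedly a single monomial r x^m survives;
inverting x if m < 0 and shifting x to x + 1 yields r (x + 1)^p, from which the same
elimination isolates a linear function s x. Finally, every q equals s x + s (q/s - x) for
a suitable x.\<close>

definition sum_of_values :: "(rat \<Rightarrow> rat) \<Rightarrow> nat \<Rightarrow> rat \<Rightarrow> bool" where
  "sum_of_values f N v \<longleftrightarrow> (\<exists>a::nat \<Rightarrow> rat. (\<forall>i<N. a i \<noteq> 0) \<and> v = (\<Sum>i<N. f (a i)))"

lemma sum_of_values_zero: "sum_of_values f 0 0"
  unfolding sum_of_values_def by auto

lemma sum_of_values_add:
  assumes "sum_of_values f N u" "sum_of_values f M v"
  shows "sum_of_values f (N + M) (u + v)"
proof -
  obtain a where a: "\<forall>i<N. a i \<noteq> 0" "u = (\<Sum>i<N. f (a i))"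
    using assms(1) unfolding sum_of_values_def by blast
  obtain b where b: "\<forall>i<M. b i \<noteq> 0" "v = (\<Sum>i<M. f (b i))"
    using assms(2) unfolding sum_of_values_def by blast
  define c where "c i = (if i < N then a i else b (i - N))" for i
  have "(\<Sum>i<N + M. f (c i)) = (\<Sum>i<N. f (c i)) + (\<Sum>i<M. f (c (N + i)))"
    by (induction M) (simp_all add: ac_simps)
  also have "\<dots> = u + v"
    using a b by (simp add: c_def)
  finally have "u + v = (\<Sum>i<N + M. f (c i))" ..
  moreover have "\<forall>i<N + M. c i \<noteq> 0"
    using a(1) b(1) by (auto simp: c_def)
  ultimately show ?thesis
    unfolding sum_of_values_def by blast
qed

lemma sum_of_values_uminus:
  assumes "\<And>x. f (- x) = - f x" "sum_of_values f N v"
  shows "sum_of_values f N (- v)"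
proof -
  obtain a where "\<forall>i<N. a i \<noteq> 0" "v = (\<Sum>i<N. f (a i))"
    using assms(2) unfolding sum_of_values_def by blast
  then show ?thesis
    unfolding sum_of_values_def using assms(1)
    by (intro exI[of _ "\<lambda>i. - a i"]) (simp add: sum_negf)
qed

lemma sum_of_values_of_nat_mult:
  assumes "sum_of_values f N v"
  shows "sum_of_values f (n * N) (of_nat n * v)"
proof (induction n)
  case 0
  show ?case by (simp add: sum_of_values_zero)
next
  case (Suc n)
  from sum_of_values_add[OF assms Suc] show ?case
    by (simp add: distrib_right add.commute)
qed

lemma almost_all_sum_of_values_self: "\<forall>\<^sub>\<infinity>x. sum_of_values f 1 (f x)"
proof -
  have "\<forall>\<^sub>\<infinity>x. x \<noteq> (0::rat)" by simp
  then show ?thesis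
    by (rule MOST_mono) (auto simp: sum_of_values_def intro!: exI[of _ "\<lambda>_. x" for x])
qed

lemma sum_of_values_linear_combination:
  assumes odd: "\<And>x. f (- x) = - f x"
    and "sum_of_values f N u" "sum_of_values f N v"
  shows "sum_of_values f (A * N + B * N) (of_nat A * u - of_nat B * v)"
proof -
  have "sum_of_values f (A * N) (of_nat A * u)"
    using assms(2) by (rule sum_of_values_of_nat_mult)
  moreover have "sum_of_values f (B * N) (- (of_nat B * v))"
    using odd sum_of_values_of_nat_mult[OF assms(3)] by (rule sum_of_values_uminus)
  ultimately show ?thesis
    using sum_of_values_add by fastforce
qed

lemma almost_all_sum_of_values_dilate_diff:
  fixes t :: rat
  assumes odd: "\<And>x. f (- x) = - f x"
    and h: "\<forall>\<^sub>\<infinity>x. sum_of_values f N (h x)"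
    and "t \<noteq> 0"
  shows "\<forall>\<^sub>\<infinity>x. sum_of_values f (A * N + B * N) (of_nat A * h (t * x) - of_nat B * h x)"
proof -
  have "inj (\<lambda>x. t * x)"
    using \<open>t \<noteq> 0\<close> by (auto simp: inj_on_def)
  with h have "\<forall>\<^sub>\<infinity>x. sum_of_values f N (h (t * x))"
    by (rule MOST_inj)
  with h show ?thesis
    by (rule MOST_rev_mp[OF MOST_conjI])
      (auto intro!: MOST_I sum_of_values_linear_combination[where f = f, OF odd])
qed

lemma laurent_sum_dilate_diff:
  fixes d :: "int \<Rightarrow> 'a::field"
  shows "a * (\<Sum>k\<in>S. d k * (t * x) powi k) - b * (\<Sum>k\<in>S. d k * x powi k)
       = (\<Sum>k\<in>S. d k * (a * t powi k - b) * x powi k)"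
  by (simp add: sum_distrib_left sum_subtractf[symmetric] power_int_mult_distrib algebra_simps)

lemma power_int_inject_exp:
  fixes a :: "'a::linordered_field"
  assumes "1 < a"
  shows "a powi m = a powi n \<longleftrightarrow> m = n"
  using power_int_strict_increasing[OF _ assms] by (metis linorder_neq_iff order_less_irrefl)

lemma of_nat_mult_two_powi_eq:
  obtains A B :: nat where "A > 0" "of_nat A * (2::rat) powi j = of_nat B"
proof (cases "j \<ge> 0")
  case True
  then have "j = int (nat j)"
    by simp
  then have "(2::rat) powi j = 2 ^ nat j"
    by (metis power_int_of_nat)
  then show ?thesis
    using that[of 1 "2 ^ nat j"] by simp
next
  case False
  then have "j = - int (nat (- j))"
    by simp
  then have "(2::rat) powi j = inverse (2 ^ nat (- j))"
    by (metis power_int_minus power_int_of_nat)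
  then show ?thesis
    using that[of "2 ^ nat (- j)" 1] by simp
qed

lemma almost_all_isolate_monomial:
  assumes odd: "\<And>x. f (- x) = - f x"
    and "finite K" "m \<notin> K" "d m \<noteq> 0"
    and "\<forall>\<^sub>\<infinity>x. sum_of_values f N (\<Sum>k\<in>insert m K. d k * x powi k)"
  shows "\<exists>N' r. r \<noteq> 0 \<and> (\<forall>\<^sub>\<infinity>x. sum_of_values f N' (r * x powi m))"
  using assms(2-)
proof (induction K arbitrary: d N rule: finite_induct)
  case empty
  then show ?case by (intro exI[of _ N] exI[of _ "d m"]) simp
next
  case (insert j K)
  obtain A B :: nat where "A > 0" and AB: "of_nat A * (2::rat) powi j = of_nat B"
    by (rule of_nat_mult_two_powi_eq)
  define d' where "d' k = d k * (of_nat A * 2 powi k - of_nat B)" for k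
  have "d' j = 0"
    using AB by (simp add: d'_def)
  have "d' k \<noteq> 0" if "d k \<noteq> 0" "k \<noteq> j" for k
  proof
    assume "d' k = 0"
    with that have "of_nat A * (2::rat) powi k = of_nat A * 2 powi j"
      using AB by (simp add: d'_def)
    with \<open>A > 0\<close> have "(2::rat) powi k = 2 powi j"
      by simp
    with \<open>k \<noteq> j\<close> show False
      by (simp add: power_int_inject_exp)
  qed
  have "of_nat A * (\<Sum>k\<in>insert m (insert j K). d k * (2 * x) powi k)
      - of_nat B * (\<Sum>k\<in>insert m (insert j K). d k * x powi k)
      = (\<Sum>k\<in>insert m K. d' k * x powi k)" for x
  proof -
    have "j \<notin> insert m K"
      using insert.hyps(2) insert.prems(1) by auto
    then show ?thesis
      unfolding laurent_sum_dilate_diff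
      using insert.hyps(1) \<open>d' j = 0\<close> by (simp add: insert_commute d'_def)
  qed
  with almost_all_sum_of_values_dilate_diff[where f = f, OF odd insert.prems(3), of 2 A B]
  have "\<forall>\<^sub>\<infinity>x. sum_of_values f (A * N + B * N) (\<Sum>k\<in>insert m K. d' k * x powi k)"
    by simp
  moreover have "m \<notin> K" "d' m \<noteq> 0"
    using insert.prems(1,2) \<open>\<And>k. d k \<noteq> 0 \<Longrightarrow> k \<noteq> j \<Longrightarrow> d' k \<noteq> 0\<close> by auto
  ultimately show ?case
    using insert.IH by blast
qed

lemma almost_all_power_of_powi:
  fixes r :: rat
  assumes "m \<noteq> 0" "\<forall>\<^sub>\<infinity>x. P (r * x powi m)"
  obtains p where "p \<ge> 1" "\<forall>\<^sub>\<infinity>x. P (r * x ^ p)"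
proof (cases "m > 0")
  case True
  then have "x powi m = x ^ nat m" for x :: rat
    by (metis power_int_of_nat int_nat_eq less_le_not_le)
  with assms(2) True that[of "nat m"] show ?thesis
    by simp
next
  case False
  have "inj (inverse :: rat \<Rightarrow> rat)"
    by (simp add: inj_on_def)
  with assms(2) have "\<forall>\<^sub>\<infinity>x. P (r * inverse x powi m)"
    by (rule MOST_inj)
  moreover have "inverse x powi m = x ^ nat (- m)" for x :: rat
  proof -
    have "- m = int (nat (- m))"
      using False by simp
    then show ?thesis
      by (metis power_int_inverse power_int_minus power_int_of_nat)
  qed
  ultimately show ?thesis
    using False assms(1) that[of "nat (- m)"] by simp
qed

lemma almost_all_linear_of_power:
  assumes odd: "\<And>x. f (- x) = - f x"
    and "r \<noteq> 0" "p \<ge> 1"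
    and "\<forall>\<^sub>\<infinity>x. sum_of_values f N (r * x ^ p)"
  shows "\<exists>N' s. s \<noteq> 0 \<and> (\<forall>\<^sub>\<infinity>x. sum_of_values f N' (s * x))"
proof -
  define d where "d k = r * of_nat (p choose nat k)" for k :: int
  define K where "K = int ` {..p} - {1}"
  have "insert 1 K = int ` {..p}"
    using \<open>p \<ge> 1\<close> by (force simp: K_def)
  have binomial: "r * (x + 1) ^ p = (\<Sum>k\<in>insert 1 K. d k * x powi k)" for x :: rat
  proof -
    have "r * (x + 1) ^ p = (\<Sum>k\<le>p. d (int k) * x powi (int k))"
      by (simp add: binomial_ring sum_distrib_left d_def mult.assoc)
    also have "\<dots> = (\<Sum>k\<in>int ` {..p}. d k * x powi k)"
      by (simp add: sum.reindex)
    finally show ?thesis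
      by (simp add: \<open>insert 1 K = int ` {..p}\<close>)
  qed
  have "inj (\<lambda>x::rat. x + 1)"
    by (simp add: inj_on_def)
  with assms(4) have "\<forall>\<^sub>\<infinity>x. sum_of_values f N (r * (x + 1) ^ p)"
    by (rule MOST_inj)
  then have "\<forall>\<^sub>\<infinity>x. sum_of_values f N (\<Sum>k\<in>insert 1 K. d k * x powi k)"
    by (simp only: binomial)
  moreover have "finite K" "1 \<notin> K" "d 1 \<noteq> 0"
    using \<open>r \<noteq> 0\<close> \<open>p \<ge> 1\<close> by (auto simp: K_def d_def)
  ultimately show ?thesis
    using almost_all_isolate_monomial[where f = f, OF odd] by fastforce
qed

lemma all_sum_of_values_of_linear:
  assumes "s \<noteq> 0" "\<forall>\<^sub>\<infinity>x. sum_of_values f N (s * x)"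
  shows "N \<ge> 1" "sum_of_values f (N + N) q"
proof -
  have "\<forall>\<^sub>\<infinity>x. x \<noteq> 0 \<and> sum_of_values f N (s * x)"
    using assms(2) by (simp add: MOST_conjI)
  then obtain x where "x \<noteq> 0" "sum_of_values f N (s * x)"
    using MOST_INFM[OF infinite_UNIV_char_0] INFM_EX by blast
  with \<open>s \<noteq> 0\<close> show "N \<ge> 1"
    by (cases N) (auto simp: sum_of_values_def)
  have "inj (\<lambda>x. q / s - x)"
    by (simp add: inj_on_def)
  with assms(2) have "\<forall>\<^sub>\<infinity>x. sum_of_values f N (s * (q / s - x))"
    by (rule MOST_inj)
  with assms(2) have "\<forall>\<^sub>\<infinity>x. sum_of_values f N (s * x) \<and> sum_of_values f N (s * (q / s - x))"
    by (rule MOST_conjI)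
  then obtain y where "sum_of_values f N (s * y)" "sum_of_values f N (s * (q / s - y))"
    using MOST_INFM[OF infinite_UNIV_char_0] INFM_EX by blast
  from sum_of_values_add[OF this] show "sum_of_values f (N + N) q"
    using \<open>s \<noteq> 0\<close> by (simp add: algebra_simps)
qed

lemma laurent_odd_coeff_0:
  assumes "laurent_odd c"
  shows "c 0 = 0"
  using assms unfolding laurent_odd_def by (metis power_int_0_right mult_1 neg_equal_zero)

lemma leval_uminus:
  assumes "laurent_odd c"
  shows "leval c (- a) = - leval c a"
proof -
  have "c k * (- a) powi k = - (c k * a powi k)" for k
  proof -
    have "(- a) powi k = (- 1) powi k * a powi k"
      using power_int_mult_distrib[of "- 1" a k] by simp
    moreover have "(- 1) powi k * c k = - c k"
      using assms unfolding laurent_odd_def by blast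
    ultimately show ?thesis
      by (metis mult.assoc mult.commute mult_minus_left)
  qed
  then show ?thesis
    unfolding leval_def by (simp add: sum_negf)
qed

theorem corollary3p5:
  fixes c :: "int \<Rightarrow> rat"
  assumes "laurent_poly c"
    and "c \<noteq> (\<lambda>_. 0)"
    and "laurent_odd c"
  shows "\<exists>N::nat. N \<ge> 1 \<and>
           (\<forall>q::rat. \<exists>a::nat \<Rightarrow> rat. (\<forall>i<N. a i \<noteq> 0) \<and> q = (\<Sum>i<N. leval c (a i)))"
proof -
  let ?S = "{k. c k \<noteq> 0}"
  have odd: "\<And>x. leval c (- x) = - leval c x"
    using assms(3) by (rule leval_uminus)
  obtain m where "c m \<noteq> 0"
    using assms(2) by blast
  with laurent_odd_coeff_0[OF assms(3)] have "m \<noteq> 0"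
    by auto
  have "insert m (?S - {m}) = ?S"
    using \<open>c m \<noteq> 0\<close> by blast
  then have "\<forall>\<^sub>\<infinity>x. sum_of_values (leval c) 1 (\<Sum>k\<in>insert m (?S - {m}). c k * x powi k)"
    using almost_all_sum_of_values_self[of "leval c"] by (simp add: leval_def)
  with almost_all_isolate_monomial[where f = "leval c", OF odd] assms(1) \<open>c m \<noteq> 0\<close>
  obtain N r where "r \<noteq> 0" and monomial: "\<forall>\<^sub>\<infinity>x. sum_of_values (leval c) N (r * x powi m)"
    unfolding laurent_poly_def by blast
  obtain p where "p \<ge> 1" "\<forall>\<^sub>\<infinity>x. sum_of_values (leval c) N (r * x ^ p)"
    using \<open>m \<noteq> 0\<close> monomial by (rule almost_all_power_of_powi)
  with almost_all_linear_of_power[where f = "leval c", OF odd \<open>r \<noteq> 0\<close>]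
  obtain N' s where "s \<noteq> 0" "\<forall>\<^sub>\<infinity>x. sum_of_values (leval c) N' (s * x)"
    by blast
  from all_sum_of_values_of_linear[OF this] show ?thesis
    unfolding sum_of_values_def by (intro exI[of _ "N' + N'"]) auto
qed

end
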